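(* Let $M>N$. Then for a generic $M$-element frame $\mathcal F=\{f_1,\dots,f_M\}$ for $\mathbb R^N$, the set of vectors $x\in\mathbb R^N$ such that every $y\in\mathbb R^N$ with $|\langle y,f_k\rangle|=|\langle x,f_k\rangle|$ for all $k$ satisfies $y=\pm x$ contains an open dense subset of $\mathbb R^N$.
   Context: An $M$-element frame for $\mathbb R^N$ is a spanning family $\{f_1,\dots,f_M\}\subset\mathbb R^N$; "generic" means: for all frames in an open dense subset of the set of $M$-element frames (topology of $N\times M$ real matrices of rank $N$, or equivalently of their ranges of coefficients in the Grassmannian $Gr(N,M)$). *)

theory Defs
  imports "HOL-Analysis.Analysis"
begin

text \<open>An M-element frame for R^N, represented as the family k \<mapsto> F $ k
  (k ranges over the finite index type 'm with CARD('m) = M, vectors in real^'n with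
  CARD('n) = N).\<close>
definition is_frame :: "(real^'n)^'m \<Rightarrow> bool" where
  "is_frame F \<longleftrightarrow> span (range (\<lambda>k. F $ k)) = UNIV"

definition recoverable_up_to_sign :: "(real^'n)^'m \<Rightarrow> real^'n \<Rightarrow> bool" where
  "recoverable_up_to_sign F x \<longleftrightarrow>
     (\<forall>y::real^'n. (\<forall>k. \<bar>y \<bullet> (F $ k)\<bar> = \<bar>x \<bullet> (F $ k)\<bar>) \<longrightarrow> y = x \<or> y = - x)"

end

theory Submission
  imports Defs "HOL-Computational_Algebra.Polynomial"
begin

text \<open>
  Call a frame full spark if every N of its vectors are linearly independent. Full spark
  frames form an open set (finitely many minors are nonzero) which is dense (along a line
  towards a Vandermonde frame every minor is a nonzero polynomial), and they span.

  Let F be full spark and suppose \<open>\<bar>\<langle>y, f\<^sub>k\<rangle>\<bar> = \<bar>\<langle>x, f\<^sub>k\<rangle>\<bar>\<close> for all k but \<open>y \<noteq> \<plusminus>x\<close>.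
  With S the set of k where \<open>\<langle>y - x, f\<^sub>k\<rangle> = 0\<close>, the vector \<open>y - x\<close> is orthogonal to
  \<open>f\<^sub>k\<close> for \<open>k \<in> S\<close> and \<open>y + x\<close> to \<open>f\<^sub>k\<close> for \<open>k \<notin> S\<close>. Both are nonzero, so full spark forces
  \<open>|S| < N\<close> and \<open>|S\<^sup>c| < N\<close>, and x lies in the sum of the two orthogonal complements,
  a subspace of dimension at most \<open>(N - |S|) + (N - |S\<^sup>c|) = 2N - M < N\<close>. The
  finitely many such subspaces form a closed set with empty interior; its complement is
  the required open dense set of recoverable vectors.
\<close>

definition select_rows :: "'a^'n^'m \<Rightarrow> ('k \<Rightarrow> 'm) \<Rightarrow> 'a^'n^'k" where
  "select_rows A \<sigma> = (\<chi> i. A $ \<sigma> i)"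

definition full_spark :: "(real^'n)^'m \<Rightarrow> bool" where
  "full_spark F \<longleftrightarrow> (\<forall>\<sigma>::'n \<Rightarrow> 'm. inj \<sigma> \<longrightarrow> det (select_rows F \<sigma>) \<noteq> 0)"

lemma row_select_rows: "row i (select_rows A \<sigma>) = A $ \<sigma> i"
  by (simp add: row_def select_rows_def vec_lambda_eta)

lemma rows_select_rows: "rows (select_rows A \<sigma>) = range (\<lambda>i. A $ \<sigma> i)"
  by (auto simp: rows_def row_select_rows)

lemma select_rows_add_scaleR:
  "select_rows (A + s *\<^sub>R B) \<sigma> = select_rows A \<sigma> + s *\<^sub>R select_rows B \<sigma>"
  by (simp add: vec_eq_iff select_rows_def)

lemma open_full_spark: "open {F::(real^'n)^'m. full_spark F}"
proof -
  have "{F::(real^'n)^'m. full_spark F} =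
        (\<Inter>\<sigma>\<in>{\<sigma>::'n \<Rightarrow> 'm. inj \<sigma>}. {F. det (select_rows F \<sigma>) \<noteq> 0})"
    unfolding full_spark_def by auto
  moreover have "continuous_on UNIV (\<lambda>F::(real^'n)^'m. det (select_rows F \<sigma>))" for \<sigma> :: "'n \<Rightarrow> 'm"
    unfolding det_def select_rows_def by (intro continuous_intros)
  then have "open {F::(real^'n)^'m. det (select_rows F \<sigma>) \<noteq> 0}" for \<sigma> :: "'n \<Rightarrow> 'm"
    by (rule open_Collect_neq[OF _ continuous_on_const])
  ultimately show ?thesis by (auto intro: open_INT)
qed

lemma det_nonzero_rows:
  fixes A :: "real^'n^'n"
  assumes "det A \<noteq> 0"
  shows "span (rows A) = UNIV" "independent (rows A)" "inj (\<lambda>i. row i A)"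
proof -
  obtain B where "B ** A = mat 1"
    using assms invertible_det_nz unfolding invertible_def by blast
  then show "span (rows A) = UNIV" using matrix_left_invertible_span_rows by blast
  show "independent (rows A)" using det_dependent_rows[of A] assms by (auto simp: dependent_vec_eq)
  show "inj (\<lambda>i. row i A)" using det_identical_rows assms by (metis injI)
qed

lemma full_spark_imp_frame:
  assumes "full_spark (F::(real^'n)^'m)" "CARD('n) \<le> CARD('m)"
  shows "is_frame F"
proof -
  obtain \<sigma> :: "'n \<Rightarrow> 'm" where "inj \<sigma>"
    using card_le_inj[of "UNIV::'n set" "UNIV::'m set"] assms(2) by auto
  then have "span (range (\<lambda>i. F $ \<sigma> i)) = UNIV"
    using assms(1) det_nonzero_rows(1) rows_select_rows unfolding full_spark_def by metis
  moreover have "span (range (\<lambda>i. F $ \<sigma> i)) \<subseteq> span (range (($) F))"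
    by (intro span_mono) auto
  ultimately show ?thesis unfolding is_frame_def by auto
qed

lemma full_spark_independent:
  fixes F :: "(real^'n)^'m"
  assumes "full_spark F" "CARD('n) \<le> CARD('m)" "card S \<le> CARD('n)"
  shows "independent (($) F ` S)" "inj_on (($) F) S"
proof -
  obtain S' where S': "S \<subseteq> S'" "card S' = CARD('n)"
    using exists_subset_between[of S "CARD('n)" UNIV] assms(2,3) by auto
  then obtain \<sigma> :: "'n \<Rightarrow> 'm" where "bij_betw \<sigma> UNIV S'"
    using finite_same_card_bij[of "UNIV::'n set" S'] by auto
  then have \<sigma>: "inj \<sigma>" "range \<sigma> = S'" by (auto simp: bij_betw_def)
  then have det: "det (select_rows F \<sigma>) \<noteq> 0" using assms(1) unfolding full_spark_def by blast
  have "($) F ` S' = rows (select_rows F \<sigma>)" using rows_select_rows \<sigma>(2) by (metis image_image)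
  then have "independent (($) F ` S')" using det_nonzero_rows(2)[OF det] by simp
  then show "independent (($) F ` S)" by (rule independent_mono) (use S' in auto)
  have "inj (($) F \<circ> \<sigma>)"
    using det_nonzero_rows(3)[OF det] by (simp add: row_select_rows comp_def)
  then have "inj_on (($) F) S'" using \<sigma>(2) inj_on_imageI by blast
  then show "inj_on (($) F) S" using S'(1) by (rule inj_on_subset)
qed

definition frame_perp :: "(real^'n)^'m \<Rightarrow> 'm set \<Rightarrow> (real^'n) set" where
  "frame_perp F S = {y. \<forall>k\<in>S. y \<bullet> F $ k = 0}"

definition ambiguity_subspace :: "(real^'n)^'m \<Rightarrow> 'm set \<Rightarrow> (real^'n) set" where
  "ambiguity_subspace F S = {a + b | a b. a \<in> frame_perp F S \<and> b \<in> frame_perp F (- S)}"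

lemma subspace_frame_perp: "subspace (frame_perp F S)"
  by (auto simp: subspace_def frame_perp_def inner_add_left)

lemma subspace_ambiguity_subspace: "subspace (ambiguity_subspace F S)"
  unfolding ambiguity_subspace_def by (intro subspace_sums subspace_frame_perp)

lemma dim_frame_perp:
  fixes F :: "(real^'n)^'m"
  assumes "full_spark F" "CARD('n) \<le> CARD('m)"
  shows "dim (frame_perp F S) + min (card S) CARD('n) \<le> CARD('n)"
proof -
  obtain S0 where S0: "S0 \<subseteq> S" "card S0 = min (card S) CARD('n)"
    using obtain_subset_with_card_n[of "min (card S) CARD('n)" S] by auto
  let ?A = "span (($) F ` S0)"
  have "dim ?A = card S0"
    using full_spark_independent[OF assms, of S0] S0(2)
    by (simp add: dim_eq_card_independent card_image)
  moreover have "frame_perp F S \<subseteq> {y. \<forall>x \<in> ?A. orthogonal x y}"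
    using S0(1) orthogonal_to_span
    by (fastforce simp: frame_perp_def orthogonal_def inner_commute)
  then have "dim (frame_perp F S) \<le> dim {y \<in> UNIV. \<forall>x \<in> ?A. orthogonal x y}"
    by (simp add: dim_subset)
  moreover have "dim {y \<in> UNIV. \<forall>x \<in> ?A. orthogonal x y} + dim ?A = CARD('n)"
    using dim_subspace_orthogonal_to_vectors[of ?A UNIV] by simp
  ultimately show ?thesis using S0(2) by linarith
qed

lemma frame_perp_nontrivial_imp_card_less:
  fixes F :: "(real^'n)^'m"
  assumes "full_spark F" "CARD('n) \<le> CARD('m)" "u \<in> frame_perp F S" "u \<noteq> 0"
  shows "card S < CARD('n)"
proof -
  have "dim (frame_perp F S) \<noteq> 0" using assms(3,4) dim_eq_0 by blast
  then show ?thesis using dim_frame_perp[OF assms(1,2), of S] by linarith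
qed

lemma dim_ambiguity_subspace:
  fixes F :: "(real^'n)^'m"
  assumes "full_spark F" "CARD('n) < CARD('m)" "card S < CARD('n)" "card (- S) < CARD('n)"
  shows "dim (ambiguity_subspace F S) < CARD('n)"
proof -
  have "dim (frame_perp F S) + card S \<le> CARD('n)"
    "dim (frame_perp F (- S)) + card (- S) \<le> CARD('n)"
    using dim_frame_perp[OF assms(1), of S] dim_frame_perp[OF assms(1), of "- S"] assms by auto
  moreover have "card S + card (- S) = CARD('m)"
    using card_Un_disjoint[of S "- S"] by (simp add: Un_commute)
  moreover have "dim (ambiguity_subspace F S) + dim (frame_perp F S \<inter> frame_perp F (- S)) =
                 dim (frame_perp F S) + dim (frame_perp F (- S))"
    unfolding ambiguity_subspace_def by (rule dim_sums_Int[OF subspace_frame_perp subspace_frame_perp])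
  ultimately show ?thesis using assms(2) by linarith
qed

lemma equal_moduli_split:
  assumes "\<forall>k. \<bar>y \<bullet> F $ k\<bar> = \<bar>x \<bullet> F $ k\<bar>"
  shows "\<exists>S. y - x \<in> frame_perp F S \<and> y + x \<in> frame_perp F (- S)"
proof (intro exI conjI)
  let ?S = "{k. (y - x) \<bullet> F $ k = 0}"
  show "y - x \<in> frame_perp F ?S" by (simp add: frame_perp_def)
  have "y \<bullet> F $ k = - (x \<bullet> F $ k)" if "y \<bullet> F $ k \<noteq> x \<bullet> F $ k" for k
    using assms that by (auto simp: abs_eq_iff)
  then show "y + x \<in> frame_perp F (- ?S)"
    by (force simp: frame_perp_def inner_diff_left inner_add_left)
qed

lemma recoverable_outside_ambiguity_subspaces:
  fixes F :: "(real^'n)^'m"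
  assumes "full_spark F" "CARD('n) \<le> CARD('m)"
    and x: "\<And>S. card S < CARD('n) \<Longrightarrow> card (- S) < CARD('n) \<Longrightarrow> x \<notin> ambiguity_subspace F S"
  shows "recoverable_up_to_sign F x"
  unfolding recoverable_up_to_sign_def
proof (intro allI impI)
  fix y assume "\<forall>k. \<bar>y \<bullet> F $ k\<bar> = \<bar>x \<bullet> F $ k\<bar>"
  then obtain S where S: "y - x \<in> frame_perp F S" "y + x \<in> frame_perp F (- S)"
    using equal_moduli_split by blast
  show "y = x \<or> y = - x"
  proof (rule ccontr)
    assume "\<not> (y = x \<or> y = - x)"
    then have "y - x \<noteq> 0" "y + x \<noteq> 0" by (auto simp: add_eq_0_iff)
    then have "card S < CARD('n)" "card (- S) < CARD('n)"
      using frame_perp_nontrivial_imp_card_less[OF assms(1,2)] S by auto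
    moreover have "x = (- (1/2)) *\<^sub>R (y - x) + (1/2) *\<^sub>R (y + x)"
      by (simp add: algebra_simps scaleR_2[symmetric] del: scaleR_2)
    then have "x \<in> ambiguity_subspace F S"
      using S subspace_scale[OF subspace_frame_perp] unfolding ambiguity_subspace_def by blast
    ultimately show False using x by blast
  qed
qed

lemma interior_finite_UN_closed_empty:
  fixes f :: "'a \<Rightarrow> 'b::topological_space set"
  assumes "finite A" "\<And>a. a \<in> A \<Longrightarrow> closed (f a)" "\<And>a. a \<in> A \<Longrightarrow> interior (f a) = {}"
  shows "interior (\<Union>a\<in>A. f a) = {}"
  using assms
proof (induction A rule: finite_induct)
  case (insert a A)
  then have "interior (f a \<union> (\<Union>b\<in>A. f b)) = interior (f a)"
    by (intro interior_closed_Un_empty_interior) auto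
  then show ?case using insert by simp
qed simp

lemma full_spark_recoverable_open_dense:
  fixes F :: "(real^'n)^'m"
  assumes "full_spark F" "CARD('n) < CARD('m)"
  shows "\<exists>U :: (real^'n) set. open U \<and> closure U = UNIV \<and> U \<subseteq> {x. recoverable_up_to_sign F x}"
proof (intro exI conjI)
  let ?B = "\<Union>S\<in>{S. card S < CARD('n) \<and> card (- S) < CARD('n)}. ambiguity_subspace F S"
  have closed: "closed (ambiguity_subspace F S)" for S
    by (rule closed_subspace[OF subspace_ambiguity_subspace])
  have "interior (ambiguity_subspace F S) = {}"
    if "card S < CARD('n)" "card (- S) < CARD('n)" for S
    using dim_ambiguity_subspace[OF assms that] by (intro empty_interior_lowdim) simp
  then have "interior ?B = {}"
    using closed by (intro interior_finite_UN_closed_empty) auto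
  then show "closure (- ?B) = UNIV" unfolding closure_complement by simp
  show "open (- ?B)" using closed by (intro open_Compl closed_UN) auto
  show "- ?B \<subseteq> {x. recoverable_up_to_sign F x}"
    using recoverable_outside_ambiguity_subspaces[OF assms(1)] assms(2) by auto
qed

lemma det_add_scaleR_poly:
  fixes A B :: "real^'n^'n"
  shows "\<exists>p. \<forall>s. det (A + s *\<^sub>R B) = poly p s"
proof (intro exI allI)
  fix s
  show "det (A + s *\<^sub>R B) =
    poly (\<Sum>q | q permutes (UNIV::'n set). [:of_int (sign q):] * (\<Prod>i\<in>UNIV. [:A$i$(q i), B$i$(q i):])) s"
    by (simp add: det_def poly_sum poly_prod)
qed

text \<open>For e a bijection onto \<open>{0..<N}\<close> this is a Vandermonde matrix with permuted columns.\<close>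
lemma det_vandermonde_nonzero:
  fixes t :: "'n::finite \<Rightarrow> real" and e :: "'n \<Rightarrow> nat"
  assumes "inj t" "inj e" "\<And>j. e j < CARD('n)"
  shows "det (\<chi> i j. t i ^ e j) \<noteq> 0"
proof
  let ?X = "\<chi> i j. t i ^ e j"
  assume "det ?X = 0"
  then obtain w where w: "w \<noteq> 0" "?X *v w = 0"
    using det_eq_0_rank matrix_nonfull_linear_equations_eq by fastforce
  define q where "q = (\<Sum>j\<in>UNIV. monom (w $ j) (e j))"
  have roots: "poly q (t i) = 0" for i
    using w(2) by (simp add: q_def poly_sum poly_monom vec_eq_iff matrix_vector_mult_def mult.commute)
  obtain j0 where "w $ j0 \<noteq> 0" using w(1) by (metis vec_eq_iff zero_index)
  moreover have "coeff q (e j0) = w $ j0"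
    unfolding q_def coeff_sum coeff_monom using assms(2) by (simp add: inj_eq)
  ultimately have "q \<noteq> 0" by auto
  have "degree q < CARD('n)"
    unfolding q_def using assms(3)
    by (intro degree_sum_less) (auto intro: le_less_trans[OF degree_monom_le])
  moreover have "CARD('n) = card (range t)" using assms(1) by (simp add: card_image)
  also have "\<dots> \<le> card {x. poly q x = 0}"
    using roots by (intro card_mono poly_roots_finite[OF \<open>q \<noteq> 0\<close>]) auto
  also have "\<dots> \<le> degree q" by (rule card_poly_roots_bound[OF \<open>q \<noteq> 0\<close>])
  ultimately show False by linarith
qed

lemma exists_full_spark: "\<exists>F::(real^'n)^'m. full_spark F"
proof -
  obtain e :: "'n \<Rightarrow> nat" where "bij_betw e UNIV {0..<CARD('n)}"
    using ex_bij_betw_finite_nat[of "UNIV::'n set"] by auto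
  then have e: "inj e" "\<And>j. e j < CARD('n)" by (auto simp: bij_betw_def)
  obtain c :: "'m \<Rightarrow> nat" where "bij_betw c UNIV {0..<CARD('m)}"
    using ex_bij_betw_finite_nat[of "UNIV::'m set"] by auto
  then have c: "inj c" by (auto simp: bij_betw_def)
  have "det (select_rows (\<chi> k j. real (c k) ^ e j) \<sigma>) \<noteq> 0" if "inj \<sigma>" for \<sigma> :: "'n \<Rightarrow> 'm"
  proof -
    have "inj (\<lambda>i. real (c (\<sigma> i)))" using c that by (auto simp: inj_def)
    then show ?thesis
      using det_vandermonde_nonzero[OF _ e] by (simp add: select_rows_def)
  qed
  then show ?thesis unfolding full_spark_def by blast
qed

lemma closure_full_spark: "closure {F::(real^'n)^'m. full_spark F} = UNIV"
proof -
  obtain A :: "(real^'n)^'m" where A: "full_spark A" using exists_full_spark by blast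
  have "F \<in> closure {F. full_spark F}" for F :: "(real^'n)^'m"
  proof -
    define P where "P s = F + s *\<^sub>R (A - F)" for s :: real
    define Z where "Z = (\<Union>\<sigma>\<in>{\<sigma>::'n \<Rightarrow> 'm. inj \<sigma>}. {s. det (select_rows (P s) \<sigma>) = 0})"
    have "finite {s. det (select_rows (P s) \<sigma>) = 0}" if "inj \<sigma>" for \<sigma> :: "'n \<Rightarrow> 'm"
    proof -
      obtain p where p: "\<And>s. det (select_rows (P s) \<sigma>) = poly p s"
        using det_add_scaleR_poly unfolding P_def select_rows_add_scaleR by blast
      have "P 1 = A" by (simp add: P_def)
      then have "p \<noteq> 0" using p[of 1] A that unfolding full_spark_def by auto
      then show ?thesis using poly_roots_finite[of p] p by simp
    qed
    then have "finite Z" unfolding Z_def by auto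
    then have "closure (- Z) = UNIV" by (simp add: closure_complement empty_interior_finite)
    moreover have "P ` closure (- Z) \<subseteq> closure {F. full_spark F}"
    proof (rule image_closure_subset)
      show "continuous_on (closure (- Z)) P" unfolding P_def by (intro continuous_intros)
      show "P ` (- Z) \<subseteq> closure {F. full_spark F}"
        using closure_subset by (fastforce simp: Z_def full_spark_def)
    qed simp
    moreover have "P 0 = F" by (simp add: P_def)
    ultimately show ?thesis by blast
  qed
  then show ?thesis by blast
qed

theorem theorem2p9:
  assumes "CARD('m::finite) > CARD('n::finite)"
  shows "\<exists>G :: ((real^'n)^'m) set.
           open G \<and> G \<subseteq> {F. is_frame F} \<and> {F. is_frame F} \<subseteq> closure G \<and>
           (\<forall>F\<in>G. \<exists>U :: (real^'n) set. open U \<and> closure U = UNIV \<and>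
                      U \<subseteq> {x. recoverable_up_to_sign F x})"
proof (intro exI conjI)
  show "open {F::(real^'n)^'m. full_spark F}" by (rule open_full_spark)
  show "{F::(real^'n)^'m. full_spark F} \<subseteq> {F. is_frame F}"
    using assms by (auto intro: full_spark_imp_frame)
  show "{F. is_frame F} \<subseteq> closure {F::(real^'n)^'m. full_spark F}"
    by (simp add: closure_full_spark)
  show "\<forall>F\<in>{F::(real^'n)^'m. full_spark F}. \<exists>U. open U \<and> closure U = UNIV \<and>
          U \<subseteq> {x. recoverable_up_to_sign F x}"
    using full_spark_recoverable_open_dense assms by blast
qed

end
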